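(* Let $\Gamma$ be a discrete subgroup of $E(n)$, and let $A=\lambda A'$, where $A'\in O(n)$ and $\lambda>0$. Suppose that $A\Gamma A^{-1}\subset\Gamma$ and $\lambda\le1$. Then $A\Gamma A^{-1}=\Gamma$.
   Context: $E(n)$ denotes the group of isometries of $\mathbb{R}^n$ (maps $x\mapsto Bx+b$, $B\in O(n)$, $b\in\mathbb{R}^n$) with the topology of $O(n)\times\mathbb{R}^n$; discreteness refers to this topology. $A\Gamma A^{-1}=\{A\circ\gamma\circ A^{-1}:\gamma\in\Gamma\}$. *)

theory Defs
  imports "HOL-Analysis.Analysis"
begin

text \<open>An element of E(n) is encoded as a pair (B, b) with B an orthogonal matrix;
  it acts as the map x \<mapsto> B x + b. The topology on such pairs is the product
  topology of the matrix space and R^n (restricted to O(n) x R^n).\<close>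

definition isom :: "((real^'n^'n) \<times> (real^'n)) \<Rightarrow> (real^'n \<Rightarrow> real^'n)" where
  "isom g = (\<lambda>x. fst g *v x + snd g)"

definition Euclid_group :: "((real^'n^'n) \<times> (real^'n)) set" where
  "Euclid_group = {g. orthogonal_matrix (fst g)}"

definition subgroup_E :: "((real^'n^'n) \<times> (real^'n)) set \<Rightarrow> bool" where
  "subgroup_E \<Gamma> \<longleftrightarrow> \<Gamma> \<subseteq> Euclid_group \<and> id \<in> isom ` \<Gamma> \<and>
     (\<forall>g\<in>\<Gamma>. \<forall>h\<in>\<Gamma>. isom g \<circ> isom h \<in> isom ` \<Gamma>) \<and>
     (\<forall>g\<in>\<Gamma>. inv (isom g) \<in> isom ` \<Gamma>)"

definition conj_set :: "real^'n^'n \<Rightarrow> ((real^'n^'n) \<times> (real^'n)) set \<Rightarrow> (real^'n \<Rightarrow> real^'n) set" where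
  "conj_set A \<Gamma> = {(\<lambda>x. A *v x) \<circ> isom \<gamma> \<circ> (\<lambda>x. matrix_inv A *v x) | \<gamma>. \<gamma> \<in> \<Gamma>}"

end

theory Submission
  imports Defs
begin

text \<open>Conjugation by \<open>A = c A'\<close> acts on pairs by \<open>(B, b) \<mapsto> (A' B A'\<^sup>T, c A' b)\<close>, an injective
  map of \<open>\<Gamma>\<close> into itself that does not increase the translation length \<open>|b|\<close> when \<open>c \<le> 1\<close>.
  A discrete subgroup of \<open>E(n)\<close> is uniformly discrete, because left translations are isometries
  of \<open>O(n) \<times> \<real>\<^sup>n\<close>, and its rotational parts lie in the bounded set \<open>O(n)\<close>; hence only finitely
  many elements of \<open>\<Gamma>\<close> have \<open>|b| \<le> R\<close>. Conjugation restricts to an injective self-map of each of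
  these finite sets and is therefore onto.\<close>

lemma norm_matrix_sum_squares: "norm (M::real^'n^'m) = sqrt (\<Sum>i\<in>UNIV. \<Sum>j\<in>UNIV. (M$i$j)\<^sup>2)"
  by (simp add: norm_vec_def L2_set_def sum_nonneg)

lemma norm_transpose: "norm (transpose M) = norm (M::real^'n^'m)"
  by (simp add: norm_matrix_sum_squares transpose_def sum.swap[where A = "UNIV::'n set"])

lemma norm_orthogonal_matrix_vector:
  assumes "orthogonal_matrix (Q::real^'n^'n)" shows "norm (Q *v v) = norm v"
  using assms orthogonal_transformation orthogonal_transformation_matrix matrix_vector_mul_linear
  by (metis matrix_of_matrix_vector_mul)

lemma norm_vector_matrix_mult_orthogonal:
  assumes "orthogonal_matrix (Q::real^'n^'n)" shows "norm (v v* Q) = norm v"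
  using norm_orthogonal_matrix_vector[of "transpose Q" v] assms by simp

lemma norm_matrix_mult_orthogonal_right:
  assumes "orthogonal_matrix (Q::real^'n^'n)" shows "norm (M ** Q) = norm (M::real^'n^'m)"
proof -
  have "(M ** Q) $ i = M $ i v* Q" for i
    by (simp add: vec_eq_iff matrix_matrix_mult_def vector_matrix_mult_def)
  then show ?thesis
    using assms by (simp only: norm_vec_def[of "M ** Q"] norm_vec_def[of M] norm_vector_matrix_mult_orthogonal)
qed

lemma norm_orthogonal_matrix_mult_left:
  assumes "orthogonal_matrix (Q::real^'n^'n)" shows "norm (Q ** M) = norm (M::real^'m^'n)"
proof -
  have "norm (Q ** M) = norm (transpose M ** transpose Q)"
    by (metis norm_transpose matrix_transpose_mul)
  also have "\<dots> = norm M"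
    using assms by (simp add: norm_matrix_mult_orthogonal_right norm_transpose)
  finally show ?thesis .
qed

lemma norm_orthogonal_matrix:
  assumes "orthogonal_matrix (Q::real^'n^'n)" shows "norm Q = sqrt CARD('n)"
proof -
  have "norm (Q $ i) = 1" for i
    using assms by (simp add: orthogonal_matrix_orthonormal_rows row_def vec_nth_inverse)
  then show ?thesis by (simp add: norm_vec_def L2_set_def)
qed

lemma matrix_inv_unique:
  assumes "A ** B = mat 1" "B ** A = mat 1" shows "matrix_inv A = B"
proof -
  have "A ** matrix_inv A = mat 1 \<and> matrix_inv A ** A = mat 1"
    unfolding matrix_inv_def by (rule someI[of _ B]) (use assms in simp)
  then show ?thesis by (metis assms(2) matrix_mul_assoc matrix_mul_lid matrix_mul_rid)
qed

lemma matrix_inv_scaled_orthogonal: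
  assumes "orthogonal_matrix (Q::real^'n^'n)" "c \<noteq> 0"
  shows "matrix_inv (c *\<^sub>R Q) = (1 / c) *\<^sub>R transpose Q"
proof -
  have QQ: "transpose Q ** Q = mat 1" "Q ** transpose Q = mat 1"
    using assms(1) by (simp_all add: orthogonal_matrix_def)
  show ?thesis
    using assms(2) by (intro matrix_inv_unique)
      (simp_all add: matrix_scalar_ac scalar_matrix_assoc[symmetric] QQ)
qed

lemma inj_on_nonincreasing_self_map_surj:
  fixes \<rho> :: "'a \<Rightarrow> 'b::linorder"
  assumes "inj_on f S" "f ` S \<subseteq> S" "\<And>x. x \<in> S \<Longrightarrow> \<rho> (f x) \<le> \<rho> x"
    and "\<And>r. finite {x \<in> S. \<rho> x \<le> r}"
  shows "f ` S = S"
proof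
  show "S \<subseteq> f ` S"
  proof
    fix y assume "y \<in> S"
    define T where "T = {x \<in> S. \<rho> x \<le> \<rho> y}"
    have "f ` T \<subseteq> T"
      using assms(2,3) unfolding T_def by (force intro: order_trans)
    moreover have "finite T" using assms(4) unfolding T_def .
    moreover have "inj_on f T" using assms(1) by (rule inj_on_subset) (auto simp: T_def)
    ultimately have "f ` T = T" by (simp add: endo_inj_surj)
    with \<open>y \<in> S\<close> show "y \<in> f ` S" unfolding T_def by blast
  qed
qed (rule assms(2))

lemma inj_isom: "inj isom"
proof (rule injI)
  fix g h assume e: "isom g = isom h"
  have "snd g = snd h" using fun_cong[OF e, of 0] by (simp add: isom_def)
  moreover have "fst g *v x = fst h *v x" for x
    using fun_cong[OF e, of x] \<open>snd g = snd h\<close> by (simp add: isom_def)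
  then have "fst g = fst h" by (simp add: matrix_eq)
  ultimately show "g = h" by (simp add: prod_eq_iff)
qed

lemma isom_comp: "isom g \<circ> isom h = isom (fst g ** fst h, fst g *v snd h + snd g)"
  by (rule ext) (simp add: isom_def matrix_vector_mul_assoc matrix_vector_right_distrib)

lemma isom_one: "isom (mat 1, 0) = id"
  by (simp add: isom_def id_def)

lemma inv_isom:
  assumes "orthogonal_matrix B"
  shows "inv (isom (B, b)) = isom (transpose B, - (transpose B *v b))"
proof (rule inv_unique_comp)
  have "B ** transpose B = mat 1" "transpose B ** B = mat 1"
    using assms by (simp_all add: orthogonal_matrix_def)
  then show "isom (B, b) \<circ> isom (transpose B, - (transpose B *v b)) = id"
    and "isom (transpose B, - (transpose B *v b)) \<circ> isom (B, b) = id"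
    by (simp_all add: isom_comp isom_one linear_neg[OF matrix_vector_mul_linear]
        matrix_vector_mul_assoc del: transpose_matrix_vector)
qed

lemma orthogonal_matrix_fst_subgroup_E:
  assumes "subgroup_E \<Gamma>" "g \<in> \<Gamma>" shows "orthogonal_matrix (fst g)"
  using assms unfolding subgroup_E_def Euclid_group_def by auto

lemma mat_one_zero_in_subgroup_E:
  assumes "subgroup_E \<Gamma>" shows "(mat 1, 0) \<in> \<Gamma>"
  using assms inj_isom isom_one unfolding subgroup_E_def by (metis imageE injD)

definition Euclid_ldiv :: "((real^'n^'n) \<times> (real^'n)) \<Rightarrow> ((real^'n^'n) \<times> (real^'n)) \<Rightarrow> ((real^'n^'n) \<times> (real^'n))"
  where "Euclid_ldiv g h = (transpose (fst g) ** fst h, transpose (fst g) *v (snd h - snd g))"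

lemma isom_Euclid_ldiv:
  assumes "orthogonal_matrix (fst g)"
  shows "isom (Euclid_ldiv g h) = inv (isom g) \<circ> isom h"
  using inv_isom[OF assms, of "snd g"]
  by (simp add: Euclid_ldiv_def isom_comp matrix_vector_mult_diff_distrib)

lemma Euclid_ldiv_in_subgroup_E:
  assumes "subgroup_E \<Gamma>" "g \<in> \<Gamma>" "h \<in> \<Gamma>"
  shows "Euclid_ldiv g h \<in> \<Gamma>"
proof -
  have "orthogonal_matrix (fst g)"
    using assms(1,2) by (rule orthogonal_matrix_fst_subgroup_E)
  moreover obtain g' where "g' \<in> \<Gamma>" "inv (isom g) = isom g'"
    using assms unfolding subgroup_E_def by blast
  moreover obtain k where "k \<in> \<Gamma>" "isom g' \<circ> isom h = isom k"
    using assms \<open>g' \<in> \<Gamma>\<close> unfolding subgroup_E_def by blast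
  ultimately show ?thesis
    using isom_Euclid_ldiv injD[OF inj_isom] by metis
qed

lemma dist_one_Euclid_ldiv:
  assumes "orthogonal_matrix (fst g)"
  shows "dist (mat 1, 0) (Euclid_ldiv g h) = dist g h"
proof -
  have "transpose (fst g) ** (fst g - fst h) = transpose (fst g) ** fst g - transpose (fst g) ** fst h"
    by (metis matrix_add_ldistrib diff_add_cancel add_diff_cancel_right')
  then have "mat 1 - transpose (fst g) ** fst h = transpose (fst g) ** (fst g - fst h)"
    using assms by (simp add: orthogonal_matrix_def)
  moreover have "- (transpose (fst g) *v (snd h - snd g)) = transpose (fst g) *v (snd g - snd h)"
    by (simp add: matrix_vector_mult_diff_distrib del: transpose_matrix_vector)
  moreover have "g - h = (fst g - fst h, snd g - snd h)" by (simp add: prod_eq_iff)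
  ultimately show ?thesis
    using assms by (simp add: Euclid_ldiv_def dist_norm norm_Pair
        norm_orthogonal_matrix_mult_left norm_orthogonal_matrix_vector del: transpose_matrix_vector)
qed

lemma uniform_discrete_subgroup_E:
  assumes "subgroup_E \<Gamma>" "discrete \<Gamma>"
  shows "uniform_discrete \<Gamma>"
proof -
  have "(mat 1, 0) \<in> \<Gamma>" using assms(1) by (rule mat_one_zero_in_subgroup_E)
  then obtain e where "e > 0" and e: "\<And>k. k \<in> \<Gamma> \<Longrightarrow> dist (mat 1, 0) k < e \<Longrightarrow> k = (mat 1, 0)"
    using discreteD[OF assms(2)] unfolding isolated_in_dist_Ex_iff by (metis dist_commute)
  have "g = h" if "g \<in> \<Gamma>" "h \<in> \<Gamma>" "dist g h < e" for g h
  proof -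
    have "orthogonal_matrix (fst g)"
      using assms(1) that(1) by (rule orthogonal_matrix_fst_subgroup_E)
    then have "dist (mat 1, 0) (Euclid_ldiv g h) = dist g h"
      by (rule dist_one_Euclid_ldiv)
    with e that Euclid_ldiv_in_subgroup_E[OF assms(1)] have "Euclid_ldiv g h = (mat 1, 0)"
      by simp
    with \<open>dist (mat 1, 0) (Euclid_ldiv g h) = dist g h\<close> show "g = h" by simp
  qed
  with \<open>e > 0\<close> show ?thesis by (rule uniformI1)
qed

lemma finite_subgroup_E_translation_bounded:
  fixes \<Gamma> :: "((real^'n^'n) \<times> (real^'n)) set"
  assumes "subgroup_E \<Gamma>" "discrete \<Gamma>"
  shows "finite {g \<in> \<Gamma>. norm (snd g) \<le> R}"
proof -
  have "norm g \<le> sqrt CARD('n) + R" if "g \<in> \<Gamma>" "norm (snd g) \<le> R" for g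
  proof -
    have "orthogonal_matrix (fst g)"
      using assms(1) that(1) by (rule orthogonal_matrix_fst_subgroup_E)
    then show ?thesis
      using norm_Pair_le[of "fst g" "snd g"] norm_orthogonal_matrix[of "fst g"] that(2) by simp
  qed
  then have "bounded {g \<in> \<Gamma>. norm (snd g) \<le> R}"
    by (intro boundedI) auto
  moreover have "uniform_discrete {g \<in> \<Gamma>. norm (snd g) \<le> R}"
    using uniform_discrete_subgroup_E[OF assms] by (rule uniform_discrete_subset) auto
  ultimately show ?thesis
    using uniform_discrete_finite_iff by blast
qed

definition similarity_conj :: "real \<Rightarrow> real^'n^'n \<Rightarrow> ((real^'n^'n) \<times> (real^'n)) \<Rightarrow> ((real^'n^'n) \<times> (real^'n))"
  where "similarity_conj c Q g = (Q ** fst g ** transpose Q, c *\<^sub>R (Q *v snd g))"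

lemma conj_isom_similarity_conj:
  assumes "orthogonal_matrix (Q::real^'n^'n)" "c \<noteq> 0"
  shows "(\<lambda>x. (c *\<^sub>R Q) *v x) \<circ> isom g \<circ> (\<lambda>x. matrix_inv (c *\<^sub>R Q) *v x)
    = isom (similarity_conj c Q g)"
proof (rule ext)
  fix x
  have "(c *\<^sub>R Q) *v (fst g *v ((1 / c) *\<^sub>R transpose Q *v x) + snd g)
      = Q *v (fst g *v (transpose Q *v x)) + c *\<^sub>R (Q *v snd g)"
    using assms(2) by (simp add: matrix_vector_right_distrib matrix_vector_mult_scaleR
        scaleR_matrix_vector_assoc[symmetric] del: transpose_matrix_vector)
  then show "((\<lambda>x. (c *\<^sub>R Q) *v x) \<circ> isom g \<circ> (\<lambda>x. matrix_inv (c *\<^sub>R Q) *v x)) x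
      = isom (similarity_conj c Q g) x"
    using assms by (simp add: isom_def similarity_conj_def matrix_inv_scaled_orthogonal
        matrix_vector_mul_assoc matrix_mul_assoc del: transpose_matrix_vector)
qed

lemma conj_set_scaled_orthogonal:
  assumes "orthogonal_matrix (Q::real^'n^'n)" "c \<noteq> 0"
  shows "conj_set (c *\<^sub>R Q) \<Gamma> = isom ` similarity_conj c Q ` \<Gamma>"
  unfolding conj_set_def conj_isom_similarity_conj[OF assms] by blast

lemma inj_similarity_conj:
  assumes "orthogonal_matrix (Q::real^'n^'n)" "c \<noteq> 0"
  shows "inj (similarity_conj c Q)"
proof (rule injI)
  fix g h assume "similarity_conj c Q g = similarity_conj c Q h"
  then have "transpose Q ** (Q ** fst g ** transpose Q) ** Q = transpose Q ** (Q ** fst h ** transpose Q) ** Q"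
    and "transpose Q *v (Q *v snd g) = transpose Q *v (Q *v snd h)"
    using assms(2) by (simp_all add: similarity_conj_def)
  with assms(1) show "g = h"
    by (simp add: prod_eq_iff orthogonal_matrix_def matrix_mul_assoc matrix_vector_mul_assoc
        del: transpose_matrix_vector) (simp add: matrix_mul_assoc[symmetric])
qed

lemma norm_snd_similarity_conj:
  assumes "orthogonal_matrix (Q::real^'n^'n)"
  shows "norm (snd (similarity_conj c Q g)) = \<bar>c\<bar> * norm (snd g)"
  using assms by (simp add: similarity_conj_def norm_orthogonal_matrix_vector)

theorem mainTheorem12:
  fixes \<Gamma> :: "((real^'n^'n) \<times> (real^'n)) set"
    and A A' :: "real^'n^'n" and c :: real
  assumes "subgroup_E \<Gamma>" and "discrete \<Gamma>"
    and "orthogonal_matrix A'" and "c > 0" and "A = c *\<^sub>R A'"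
    and "conj_set A \<Gamma> \<subseteq> isom ` \<Gamma>" and "c \<le> 1"
  shows "conj_set A \<Gamma> = isom ` \<Gamma>"
proof -
  have conj: "conj_set A \<Gamma> = isom ` similarity_conj c A' ` \<Gamma>"
    using assms(3-5) conj_set_scaled_orthogonal[of A' c] by simp
  with assms(6) have into: "similarity_conj c A' ` \<Gamma> \<subseteq> \<Gamma>"
    by (simp add: inj_image_subset_iff[OF inj_isom])
  have "similarity_conj c A' ` \<Gamma> = \<Gamma>"
  proof (rule inj_on_nonincreasing_self_map_surj[where \<rho> = "\<lambda>g. norm (snd g)"])
    show "inj_on (similarity_conj c A') \<Gamma>"
      using assms(3,4) inj_similarity_conj by (metis inj_on_subset less_irrefl subset_UNIV)
    show "norm (snd (similarity_conj c A' g)) \<le> norm (snd g)" for g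
      using assms(3,4,7) by (simp add: norm_snd_similarity_conj mult_left_le_one_le)
    show "finite {g \<in> \<Gamma>. norm (snd g) \<le> r}" for r
      using assms(1,2) by (rule finite_subgroup_E_translation_bounded)
  qed (rule into)
  with conj show ?thesis by simp
qed

end
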